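(* Let $n>3$ be a natural number, $\varepsilon\in(0,0.5)$ and $\delta\in(0,0.5)$. Let $P(\delta)=(p_{i,j})_{i,j=1}^n$ be the $n\times n$ stochastic matrix with $p_{i,i}=1-\varepsilon$ for all $i$; $p_{1,2}=\varepsilon$; $p_{i,i+1}=(1-\delta)\varepsilon$ for $i=2,\ldots,n-1$; $p_{i+1,i}=\delta\varepsilon$ for $i=1,\ldots,n-2$; $p_{n,n-1}=\varepsilon$; and all other entries equal to $0$. Let $\pi^*(\delta)=(\pi^*_k(\delta))_{k=1}^n$ be the unique probability (row) vector satisfying $\pi^*(\delta)P(\delta)=\pi^*(\delta)$, and let $E_{\pi^*}(\delta)=\sum_{k=1}^n k\,\pi^*_k(\delta)$. Then $$E_{\pi^*}(\delta)=\frac{\delta^{n-2}(2\delta-1)}{2\delta^{n-1}-2(1-\delta)^{n-1}}+\frac{\delta^{n-1}(2\delta-1)}{2(1-\delta)^2(\delta^{n-1}-(1-\delta)^{n-1})}\sum_{k=2}^{n-1}k\left(\frac{1-\delta}{\delta}\right)^k+n\,\frac{(1-\delta)^{n-2}(2\delta-1)}{2\delta^{n-1}-2(1-\delta)^{n-1}},$$ and consequently $$\lim_{\delta\to0^+}E_{\pi^*}(\delta)=\frac{2n-1}{2}.$$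
   Context: $P(\delta)$ is the transition matrix of a Markov chain on states $s_1,\ldots,s_n$ (probability distributions are row vectors multiplied on the left of $P$); $\pi^*(\delta)$ is its stationary distribution and $E_{\pi^*}$ is called the expected state. *)

theory Defs
  imports "HOL-Analysis.Analysis"
begin

definition Pmat :: "nat \<Rightarrow> real \<Rightarrow> real \<Rightarrow> nat \<Rightarrow> nat \<Rightarrow> real" where
  "Pmat n \<epsilon> \<delta> i j =
     (if i \<in> {1..n} \<and> j \<in> {1..n} then
        (if i = j then 1 - \<epsilon>
         else if i = 1 \<and> j = 2 then \<epsilon>
         else if 2 \<le> i \<and> i \<le> n - 1 \<and> j = i + 1 then (1 - \<delta>) * \<epsilon>
         else if 1 \<le> j \<and> j \<le> n - 2 \<and> i = j + 1 then \<delta> * \<epsilon>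
         else if i = n \<and> j = n - 1 then \<epsilon>
         else 0)
      else 0)"

definition is_stat_dist :: "nat \<Rightarrow> (nat \<Rightarrow> nat \<Rightarrow> real) \<Rightarrow> (nat \<Rightarrow> real) \<Rightarrow> bool" where
  "is_stat_dist n P \<pi> \<longleftrightarrow>
     (\<forall>k. k \<notin> {1..n} \<longrightarrow> \<pi> k = 0) \<and>
     (\<forall>k\<in>{1..n}. 0 \<le> \<pi> k) \<and>
     (\<Sum>k=1..n. \<pi> k) = 1 \<and>
     (\<forall>j\<in>{1..n}. (\<Sum>i=1..n. \<pi> i * P i j) = \<pi> j)"

definition stat_dist :: "nat \<Rightarrow> (nat \<Rightarrow> nat \<Rightarrow> real) \<Rightarrow> nat \<Rightarrow> real" where
  "stat_dist n P = (THE \<pi>. is_stat_dist n P \<pi>)"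

definition expected_state :: "nat \<Rightarrow> (nat \<Rightarrow> nat \<Rightarrow> real) \<Rightarrow> real" where
  "expected_state n P = (\<Sum>k=1..n. real k * stat_dist n P k)"

end

theory Submission
  imports Defs
begin

text \<open>
  P is a birth-death chain: it is tridiagonal with unit row sums, so \<open>\<pi> P = \<pi>\<close> holds iff the
  net flow \<open>\<pi>_j p_(j,j+1) - \<pi>_(j+1) p_(j+1,j)\<close> between neighbouring states vanishes
  (detailed balance), and since every downward rate is nonzero this determines \<open>\<pi>\<close> up to
  normalisation. The solution is proportional to \<open>w_1 = \<delta>^(n-2)\<close>,
  \<open>w_k = (1-\<delta>)^(k-2) \<delta>^(n-1-k)\<close> for \<open>1 < k < n\<close> and \<open>w_n = (1-\<delta>)^(n-2)\<close>. The middle weights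
  form a geometric sum, so \<open>(2\<delta> - 1) \<Sum> w_k = 2\<delta>^(n-1) - 2(1-\<delta>)^(n-1)\<close>, which gives the
  closed form. The weights are polynomials in \<open>\<delta>\<close>, and at \<open>\<delta> = 0\<close> only \<open>w_(n-1) = w_n = 1\<close>
  survive, so the expected state tends to \<open>((n-1) + n)/2\<close>.
\<close>

lemma sum_first_middle_last:
  fixes f :: "nat \<Rightarrow> 'a::comm_monoid_add"
  assumes "2 \<le> n"
  shows "(\<Sum>k=1..n. f k) = f 1 + (\<Sum>k=2..n-1. f k) + f n"
proof -
  have "{1..n} = insert 1 (insert n {2..n-1})" "1 \<notin> insert n {2..n-1}" "n \<notin> {2..n-1}"
    using assms by auto
  then show ?thesis
    by (simp add: add.commute add.left_commute)
qed

definition net_flow :: "(nat \<Rightarrow> nat \<Rightarrow> real) \<Rightarrow> (nat \<Rightarrow> real) \<Rightarrow> nat \<Rightarrow> real" where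
  "net_flow P \<pi> j = \<pi> j * P j (Suc j) - \<pi> (Suc j) * P (Suc j) j"

lemma net_flow_divide: "net_flow P (\<lambda>k. w k / c) j = net_flow P w j / c"
  by (simp add: net_flow_def diff_divide_distrib)

locale birth_death_chain =
  fixes n :: nat and P :: "nat \<Rightarrow> nat \<Rightarrow> real"
  assumes tridiagonal: "\<And>i j. P i j \<noteq> 0 \<Longrightarrow> i = j \<or> j = Suc i \<or> i = Suc j"
    and row_sum: "\<And>j. j \<in> {1..n} \<Longrightarrow> P j (j - 1) + P j j + P j (Suc j) = 1"
    and boundary: "P 1 0 = 0" "P n (Suc n) = 0"
    and down_nonzero: "\<And>j. 1 \<le> j \<Longrightarrow> j < n \<Longrightarrow> P (Suc j) j \<noteq> 0"
begin

lemma sum_column: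
  assumes vanish: "\<forall>k. k \<notin> {1..n} \<longrightarrow> \<pi> k = 0" and j: "j \<in> {1..n}"
  shows "(\<Sum>i=1..n. \<pi> i * P i j) =
           \<pi> (j - 1) * P (j - 1) j + \<pi> j * P j j + \<pi> (Suc j) * P (Suc j) j"
proof -
  let ?g = "\<lambda>i. \<pi> i * P i j"
  have "sum ?g {1..n} = sum ?g ({1..n} \<union> {j - 1, j, Suc j})"
    by (rule sum.mono_neutral_left) (use vanish in auto)
  also have "\<dots> = sum ?g {j - 1, j, Suc j}"
  proof (rule sum.mono_neutral_right)
    show "\<forall>i \<in> {1..n} \<union> {j - 1, j, Suc j} - {j - 1, j, Suc j}. ?g i = 0"
      using j tridiagonal by fastforce
  qed auto
  also have "\<dots> = ?g (j - 1) + ?g j + ?g (Suc j)"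
  proof -
    have "j - 1 \<noteq> j" "j - 1 \<noteq> Suc j"
      using j by auto
    then show ?thesis by simp
  qed
  finally show ?thesis .
qed

lemma stationary_eq_iff_net_flow_eq:
  assumes vanish: "\<forall>k. k \<notin> {1..n} \<longrightarrow> \<pi> k = 0" and j: "j \<in> {1..n}"
  shows "(\<Sum>i=1..n. \<pi> i * P i j) = \<pi> j \<longleftrightarrow> net_flow P \<pi> (j - 1) = net_flow P \<pi> j"
proof -
  have "\<pi> j = \<pi> j * P j (j - 1) + \<pi> j * P j j + \<pi> j * P j (Suc j)"
    using row_sum[OF j] by (metis distrib_left mult.right_neutral)
  moreover have "Suc (j - 1) = j"
    using j by simp
  ultimately show ?thesis
    unfolding sum_column[OF vanish j] net_flow_def by (simp only:) linarith
qed

lemma stationary_iff_net_flow_zero: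
  assumes vanish: "\<forall>k. k \<notin> {1..n} \<longrightarrow> \<pi> k = 0"
  shows "(\<forall>j\<in>{1..n}. (\<Sum>i=1..n. \<pi> i * P i j) = \<pi> j) \<longleftrightarrow>
         (\<forall>j. 1 \<le> j \<and> j < n \<longrightarrow> net_flow P \<pi> j = 0)"
proof -
  have ends: "net_flow P \<pi> 0 = 0" "net_flow P \<pi> n = 0"
    using vanish boundary by (auto simp: net_flow_def)
  note balance = stationary_eq_iff_net_flow_eq[OF vanish]
  show ?thesis
  proof
    assume stationary: "\<forall>j\<in>{1..n}. (\<Sum>i=1..n. \<pi> i * P i j) = \<pi> j"
    have "net_flow P \<pi> j = 0" if "j \<le> n" for j
      using that
    proof (induction j)
      case 0
      show ?case using ends by simp
    next
      case (Suc j)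
      then have "net_flow P \<pi> j = net_flow P \<pi> (Suc j)"
        using stationary balance[of "Suc j"] by simp
      with Suc show ?case by simp
    qed
    then show "\<forall>j. 1 \<le> j \<and> j < n \<longrightarrow> net_flow P \<pi> j = 0" by simp
  next
    assume "\<forall>j. 1 \<le> j \<and> j < n \<longrightarrow> net_flow P \<pi> j = 0"
    with ends have "net_flow P \<pi> j = 0" if "j \<le> n" for j
      using that by (cases "j = 0 \<or> j = n") auto
    then show "\<forall>j\<in>{1..n}. (\<Sum>i=1..n. \<pi> i * P i j) = \<pi> j"
      using balance by auto
  qed
qed

lemma net_flow_zero_proportional:
  assumes balanced_\<pi>: "\<forall>j. 1 \<le> j \<and> j < n \<longrightarrow> net_flow P \<pi> j = 0"
    and balanced_w: "\<forall>j. 1 \<le> j \<and> j < n \<longrightarrow> net_flow P w j = 0"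
    and k: "1 \<le> k" "k \<le> n"
  shows "\<pi> k * w 1 = \<pi> 1 * w k"
  using k(1)
proof (induction k rule: dec_induct)
  case base
  show ?case by simp
next
  case (step j)
  with k(2) have j: "1 \<le> j" "j < n" by simp_all
  have "\<pi> (Suc j) * w 1 * P (Suc j) j = (\<pi> j * w 1) * P j (Suc j)"
    using balanced_\<pi> j by (simp add: net_flow_def algebra_simps)
  also have "\<dots> = \<pi> 1 * (w j * P j (Suc j))"
    using step.IH by simp
  also have "\<dots> = \<pi> 1 * w (Suc j) * P (Suc j) j"
    using balanced_w j by (simp add: net_flow_def)
  finally show ?case
    using down_nonzero[OF j] by simp
qed

lemma net_flow_zero_normalized:
  assumes balanced_\<pi>: "\<forall>j. 1 \<le> j \<and> j < n \<longrightarrow> net_flow P \<pi> j = 0"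
    and balanced_w: "\<forall>j. 1 \<le> j \<and> j < n \<longrightarrow> net_flow P w j = 0"
    and vanish_\<pi>: "\<forall>k. k \<notin> {1..n} \<longrightarrow> \<pi> k = 0"
    and vanish_w: "\<forall>k. k \<notin> {1..n} \<longrightarrow> w k = 0"
    and sum_\<pi>: "(\<Sum>k=1..n. \<pi> k) = 1"
    and w1: "w 1 \<noteq> 0"
  shows "\<pi> = (\<lambda>k. w k / (\<Sum>k=1..n. w k))"
proof -
  define W where "W = (\<Sum>k=1..n. w k)"
  note proportional = net_flow_zero_proportional[OF balanced_\<pi> balanced_w]
  have "w 1 = (\<Sum>k=1..n. \<pi> k * w 1)"
    using sum_\<pi> by (simp add: sum_distrib_right[symmetric])
  also have "\<dots> = (\<Sum>k=1..n. \<pi> 1 * w k)"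
    using proportional by (intro sum.cong) auto
  finally have w1_eq: "w 1 = \<pi> 1 * W"
    by (simp add: W_def sum_distrib_left)
  with w1 have "W \<noteq> 0" "\<pi> 1 \<noteq> 0" by auto
  have "\<pi> k = w k / W" for k
  proof (cases "k \<in> {1..n}")
    case True
    then have "\<pi> k * (\<pi> 1 * W) = \<pi> 1 * w k"
      using proportional w1_eq by auto
    with \<open>W \<noteq> 0\<close> \<open>\<pi> 1 \<noteq> 0\<close> show ?thesis
      by (simp add: field_simps)
  next
    case False
    then show ?thesis using vanish_\<pi> vanish_w by simp
  qed
  then show ?thesis
    by (auto simp: W_def)
qed

theorem is_stat_dist_iff:
  assumes balanced_w: "\<forall>j. 1 \<le> j \<and> j < n \<longrightarrow> net_flow P w j = 0"
    and nonneg_w: "\<And>k. 0 \<le> w k"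
    and vanish_w: "\<forall>k. k \<notin> {1..n} \<longrightarrow> w k = 0"
    and w1: "w 1 > 0"
  shows "is_stat_dist n P \<pi> \<longleftrightarrow> \<pi> = (\<lambda>k. w k / (\<Sum>k=1..n. w k))"
proof
  assume "is_stat_dist n P \<pi>"
  then have vanish: "\<forall>k. k \<notin> {1..n} \<longrightarrow> \<pi> k = 0"
    and sum: "(\<Sum>k=1..n. \<pi> k) = 1"
    and stationary: "\<forall>j\<in>{1..n}. (\<Sum>i=1..n. \<pi> i * P i j) = \<pi> j"
    by (auto simp: is_stat_dist_def)
  have "\<forall>j. 1 \<le> j \<and> j < n \<longrightarrow> net_flow P \<pi> j = 0"
    using stationary stationary_iff_net_flow_zero[OF vanish] by blast
  then show "\<pi> = (\<lambda>k. w k / (\<Sum>k=1..n. w k))"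
    using net_flow_zero_normalized[OF _ balanced_w vanish vanish_w sum] w1 by simp
next
  define W where "W = (\<Sum>k=1..n. w k)"
  have "1 \<in> {1..n}"
    using vanish_w w1 by force
  then have "w 1 \<le> W"
    unfolding W_def using nonneg_w by (intro member_le_sum) auto
  with w1 have "W > 0" by simp
  assume "\<pi> = (\<lambda>k. w k / (\<Sum>k=1..n. w k))"
  then have \<pi>: "\<pi> = (\<lambda>k. w k / W)"
    by (simp add: W_def)
  have "(\<Sum>k=1..n. \<pi> k) = 1"
    using \<open>W > 0\<close> by (simp add: \<pi> W_def sum_divide_distrib[symmetric])
  moreover have "\<forall>j\<in>{1..n}. (\<Sum>i=1..n. \<pi> i * P i j) = \<pi> j"
    by (subst stationary_iff_net_flow_zero) (simp_all add: \<pi> vanish_w net_flow_divide balanced_w)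
  ultimately show "is_stat_dist n P \<pi>"
    unfolding is_stat_dist_def using \<open>W > 0\<close> nonneg_w vanish_w by (simp add: \<pi>)
qed

end

lemma Pmat_up:
  assumes "3 \<le> n" "1 \<le> j" "j < n"
  shows "Pmat n \<epsilon> \<delta> j (Suc j) = (if j = 1 then \<epsilon> else (1 - \<delta>) * \<epsilon>)"
  using assms by (auto simp: Pmat_def)

lemma Pmat_down:
  assumes "3 \<le> n" "1 \<le> j" "j < n"
  shows "Pmat n \<epsilon> \<delta> (Suc j) j = (if j = n - 1 then \<epsilon> else \<delta> * \<epsilon>)"
  using assms by (auto simp: Pmat_def)

lemma birth_death_chain_Pmat:
  assumes "3 \<le> n" "\<epsilon> \<noteq> 0" "\<delta> \<noteq> 0"
  shows "birth_death_chain n (Pmat n \<epsilon> \<delta>)"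
proof
  show "i = j \<or> j = Suc i \<or> i = Suc j" if "Pmat n \<epsilon> \<delta> i j \<noteq> 0" for i j
    using that by (auto simp: Pmat_def split: if_splits)
  show "Pmat n \<epsilon> \<delta> j (j - 1) + Pmat n \<epsilon> \<delta> j j + Pmat n \<epsilon> \<delta> j (Suc j) = 1"
    if "j \<in> {1..n}" for j
    using that assms(1) by (auto simp: Pmat_def algebra_simps)
  show "Pmat n \<epsilon> \<delta> 1 0 = 0" "Pmat n \<epsilon> \<delta> n (Suc n) = 0"
    by (simp_all add: Pmat_def)
  show "Pmat n \<epsilon> \<delta> (Suc j) j \<noteq> 0" if "1 \<le> j" "j < n" for j
    using that assms by (simp add: Pmat_down)
qed

definition stat_weight :: "nat \<Rightarrow> real \<Rightarrow> nat \<Rightarrow> real" where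
  "stat_weight n \<delta> k =
     (if k = 1 then \<delta> ^ (n - 2)
      else if 2 \<le> k \<and> k \<le> n - 1 then (1 - \<delta>) ^ (k - 2) * \<delta> ^ (n - 1 - k)
      else if k = n then (1 - \<delta>) ^ (n - 2)
      else 0)"

lemma stat_weight_outside: "1 \<le> n \<Longrightarrow> k \<notin> {1..n} \<Longrightarrow> stat_weight n \<delta> k = 0"
  by (auto simp: stat_weight_def)

lemma stat_weight_nonneg: "0 \<le> \<delta> \<Longrightarrow> \<delta> \<le> 1 \<Longrightarrow> 0 \<le> stat_weight n \<delta> k"
  by (auto simp: stat_weight_def)

lemma stat_weight_net_flow_zero:
  assumes n: "3 \<le> n" and j: "1 \<le> j" "j < n"
  shows "net_flow (Pmat n \<epsilon> \<delta>) (stat_weight n \<delta>) j = 0"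
proof -
  consider "j = 1" | "Suc j = n" | "2 \<le> j" "j \<le> n - 2"
    using j by linarith
  then show ?thesis
  proof cases
    case 1
    then have "n - 2 = Suc (n - 3)" "n - 1 - 2 = n - 3" "2 \<le> n - 1"
      using n by auto
    with 1 n show ?thesis
      by (simp add: net_flow_def Pmat_up Pmat_down stat_weight_def)
  next
    case 2
    then have "Pmat n \<epsilon> \<delta> j (Suc j) = (1 - \<delta>) * \<epsilon>" "Pmat n \<epsilon> \<delta> (Suc j) j = \<epsilon>"
      using Pmat_up[OF n j] Pmat_down[OF n j] n by auto
    moreover have "stat_weight n \<delta> j = (1 - \<delta>) ^ (j - 2)"
      using 2 n by (auto simp: stat_weight_def)
    moreover have "stat_weight n \<delta> (Suc j) = (1 - \<delta>) ^ (j - 2) * (1 - \<delta>)"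
    proof -
      have "n - 2 = Suc (j - 2)"
        using 2 n by simp
      with 2 show ?thesis
        by (simp add: stat_weight_def power_Suc2)
    qed
    ultimately show ?thesis
      by (simp add: net_flow_def)
  next
    case 3
    then have "Pmat n \<epsilon> \<delta> j (Suc j) = (1 - \<delta>) * \<epsilon>" "Pmat n \<epsilon> \<delta> (Suc j) j = \<delta> * \<epsilon>"
      using n j by (simp_all add: Pmat_up Pmat_down)
    moreover have "stat_weight n \<delta> j = (1 - \<delta>) ^ (j - 2) * \<delta> ^ (n - 1 - j)"
      and "stat_weight n \<delta> (Suc j) = (1 - \<delta>) ^ (Suc j - 2) * \<delta> ^ (n - 1 - Suc j)"
      using 3 by (simp_all add: stat_weight_def)
    moreover have "n - 1 - j = Suc (n - 1 - Suc j)" "Suc j - 2 = Suc (j - 2)"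
      using 3 by auto
    ultimately show ?thesis
      unfolding net_flow_def by (simp only:) (simp add: algebra_simps)
  qed
qed

lemma is_stat_dist_Pmat_iff:
  assumes "3 \<le> n" "\<epsilon> \<noteq> 0" "0 < \<delta>" "\<delta> < 1"
  shows "is_stat_dist n (Pmat n \<epsilon> \<delta>) \<pi> \<longleftrightarrow>
           \<pi> = (\<lambda>k. stat_weight n \<delta> k / (\<Sum>k=1..n. stat_weight n \<delta> k))"
proof (rule birth_death_chain.is_stat_dist_iff)
  show "birth_death_chain n (Pmat n \<epsilon> \<delta>)"
    using assms by (intro birth_death_chain_Pmat) auto
  show "\<forall>j. 1 \<le> j \<and> j < n \<longrightarrow> net_flow (Pmat n \<epsilon> \<delta>) (stat_weight n \<delta>) j = 0"
    using assms(1) by (simp add: stat_weight_net_flow_zero)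
  show "0 \<le> stat_weight n \<delta> k" for k
    using assms by (simp add: stat_weight_nonneg)
  show "\<forall>k. k \<notin> {1..n} \<longrightarrow> stat_weight n \<delta> k = 0"
    using assms(1) by (simp add: stat_weight_outside)
  show "0 < stat_weight n \<delta> 1"
    using assms by (simp add: stat_weight_def)
qed

lemma expected_state_Pmat:
  assumes "3 \<le> n" "\<epsilon> \<noteq> 0" "0 < \<delta>" "\<delta> < 1"
  shows "expected_state n (Pmat n \<epsilon> \<delta>) =
           (\<Sum>k=1..n. real k * stat_weight n \<delta> k) / (\<Sum>k=1..n. stat_weight n \<delta> k)"
proof -
  have "stat_dist n (Pmat n \<epsilon> \<delta>) = (\<lambda>k. stat_weight n \<delta> k / (\<Sum>k=1..n. stat_weight n \<delta> k))"
    unfolding stat_dist_def is_stat_dist_Pmat_iff[OF assms] by simp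
  then show ?thesis
    by (simp add: expected_state_def sum_divide_distrib)
qed

lemma sum_stat_weight_middle:
  assumes "3 \<le> n"
  shows "(\<Sum>k=2..n-1. stat_weight n \<delta> k) * (1 - 2 * \<delta>) = (1 - \<delta>) ^ (n - 2) - \<delta> ^ (n - 2)"
proof -
  have "(\<Sum>k=2..n-1. stat_weight n \<delta> k) = (\<Sum>k=2..n-1. (1 - \<delta>) ^ (k - 2) * \<delta> ^ (n - 1 - k))"
    by (rule sum.cong) (auto simp: stat_weight_def)
  also have "\<dots> = (\<Sum>i=0..n-3. (1 - \<delta>) ^ i * \<delta> ^ (n - 3 - i))"
    using assms by (intro sum.reindex_bij_witness[where i = "\<lambda>k. k + 2" and j = "\<lambda>k. k - 2"]) auto
  also have "\<dots> = (\<Sum>i<n-2. \<delta> ^ (n - 2 - Suc i) * (1 - \<delta>) ^ i)"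
    using assms by (intro sum.cong) (auto simp: mult.commute numeral_3_eq_3)
  finally show ?thesis
    using power_diff_sumr2[of "1 - \<delta>" "n - 2" \<delta>] by (simp add: algebra_simps)
qed

lemma sum_stat_weight:
  assumes "3 \<le> n"
  shows "(\<Sum>k=1..n. stat_weight n \<delta> k) * (2 * \<delta> - 1) = 2 * \<delta> ^ (n - 1) - 2 * (1 - \<delta>) ^ (n - 1)"
proof -
  define M where "M = (\<Sum>k=2..n-1. stat_weight n \<delta> k)"
  have "n - 1 = Suc (n - 2)"
    using assms by simp
  moreover have "(\<Sum>k=1..n. stat_weight n \<delta> k) = \<delta> ^ (n - 2) + M + (1 - \<delta>) ^ (n - 2)"
    using sum_first_middle_last[of n "stat_weight n \<delta>"] assms
    by (simp add: M_def stat_weight_def)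
  moreover have "M * (1 - 2 * \<delta>) = (1 - \<delta>) ^ (n - 2) - \<delta> ^ (n - 2)"
    unfolding M_def using sum_stat_weight_middle[OF assms] .
  ultimately show ?thesis
    by (simp add: algebra_simps)
qed

lemma stat_weight_middle:
  assumes "2 \<le> k" "k \<le> n - 1" "\<delta> \<noteq> 0" "\<delta> \<noteq> 1"
  shows "stat_weight n \<delta> k = \<delta> ^ (n - 1) / (1 - \<delta>)\<^sup>2 * ((1 - \<delta>) / \<delta>) ^ k"
proof -
  have "\<delta> ^ (n - 1) = \<delta> ^ k * \<delta> ^ (n - 1 - k)" "(1 - \<delta>) ^ k = (1 - \<delta>)\<^sup>2 * (1 - \<delta>) ^ (k - 2)"
    using assms(1,2) by (metis le_add_diff_inverse power_add)+
  with assms show ?thesis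
    by (simp add: stat_weight_def power_divide field_simps)
qed

lemma weighted_mean_stat_weight:
  assumes n: "3 \<le> n" and \<delta>: "0 < \<delta>" "\<delta> < 1" "\<delta> \<noteq> 1/2"
  shows "(\<Sum>k=1..n. real k * stat_weight n \<delta> k) / (\<Sum>k=1..n. stat_weight n \<delta> k) =
              \<delta> ^ (n - 2) * (2 * \<delta> - 1) / (2 * \<delta> ^ (n - 1) - 2 * (1 - \<delta>) ^ (n - 1))
              + \<delta> ^ (n - 1) * (2 * \<delta> - 1)
                  / (2 * (1 - \<delta>)^2 * (\<delta> ^ (n - 1) - (1 - \<delta>) ^ (n - 1)))
                * (\<Sum>k=2..n-1. real k * ((1 - \<delta>) / \<delta>) ^ k)
              + real n * ((1 - \<delta>) ^ (n - 2) * (2 * \<delta> - 1)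
                  / (2 * \<delta> ^ (n - 1) - 2 * (1 - \<delta>) ^ (n - 1)))"
proof -
  define D where "D = 2 * \<delta> ^ (n - 1) - 2 * (1 - \<delta>) ^ (n - 1)"
  define S where "S = (\<Sum>k=2..n-1. real k * ((1 - \<delta>) / \<delta>) ^ k)"
  have "\<delta> ^ (n - 1) \<noteq> (1 - \<delta>) ^ (n - 1)"
    using n \<delta> by (subst power_eq_iff_eq_base) auto
  then have "D \<noteq> 0"
    by (simp add: D_def)
  have W: "(\<Sum>k=1..n. stat_weight n \<delta> k) = D / (2 * \<delta> - 1)"
    using sum_stat_weight[OF n, of \<delta>] \<delta> by (simp add: D_def field_simps)
  have "(\<Sum>k=2..n-1. real k * stat_weight n \<delta> k) = \<delta> ^ (n - 1) / (1 - \<delta>)\<^sup>2 * S"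
    unfolding S_def sum_distrib_left
    using \<delta> by (intro sum.cong) (auto simp: stat_weight_middle)
  then have "(\<Sum>k=1..n. real k * stat_weight n \<delta> k) =
               \<delta> ^ (n - 2) + \<delta> ^ (n - 1) / (1 - \<delta>)\<^sup>2 * S + real n * (1 - \<delta>) ^ (n - 2)"
    using sum_first_middle_last[of n "\<lambda>k. real k * stat_weight n \<delta> k"] n
    by (simp add: stat_weight_def)
  moreover have "2 * (1 - \<delta>)\<^sup>2 * (\<delta> ^ (n - 1) - (1 - \<delta>) ^ (n - 1)) = (1 - \<delta>)\<^sup>2 * D"
    by (simp add: D_def algebra_simps)
  ultimately show ?thesis
    unfolding W D_def[symmetric] S_def[symmetric]
    using \<open>D \<noteq> 0\<close> \<delta> by (simp add: field_simps)
qed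

lemma sum_stat_weight_zero:
  fixes f :: "nat \<Rightarrow> real"
  assumes n: "3 \<le> n"
  shows "(\<Sum>k=1..n. f k * stat_weight n 0 k) = f (n - 1) + f n"
proof -
  have "(\<Sum>k=1..n. f k * stat_weight n 0 k) = (\<Sum>k\<in>{1..n}. if k \<in> {n - 1, n} then f k else 0)"
    using n by (intro sum.cong) (auto simp: stat_weight_def)
  also have "\<dots> = sum f ({1..n} \<inter> {n - 1, n})"
    by (simp add: sum.inter_restrict)
  also have "{1..n} \<inter> {n - 1, n} = {n - 1, n}"
    using n by auto
  finally show ?thesis
    using n by simp
qed

lemma isCont_stat_weight: "isCont (\<lambda>\<delta>. stat_weight n \<delta> k) x"
  unfolding stat_weight_def
  by (cases "k = 1"; cases "2 \<le> k \<and> k \<le> n - 1"; cases "k = n") (auto intro!: continuous_intros)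

lemma tendsto_weighted_mean_stat_weight:
  assumes n: "3 \<le> n"
  shows "((\<lambda>\<delta>. (\<Sum>k=1..n. real k * stat_weight n \<delta> k) / (\<Sum>k=1..n. stat_weight n \<delta> k))
           \<longlongrightarrow> (2 * real n - 1) / 2) (at_right 0)"
proof -
  have "(\<Sum>k=1..n. stat_weight n 0 k) = 2" "(\<Sum>k=1..n. real k * stat_weight n 0 k) = 2 * real n - 1"
    using sum_stat_weight_zero[OF n, of "\<lambda>_. 1"] sum_stat_weight_zero[OF n, of real] n
    by (simp_all add: of_nat_diff)
  moreover have "isCont (\<lambda>\<delta>. (\<Sum>k=1..n. real k * stat_weight n \<delta> k) / (\<Sum>k=1..n. stat_weight n \<delta> k)) 0"
    using calculation by (intro continuous_intros isCont_stat_weight) simp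
  ultimately show ?thesis
    by (auto simp: isCont_def intro: tendsto_within_subset)
qed

theorem theorem3p2:
  fixes n :: nat and \<epsilon> :: real
  assumes "n > 3" and "0 < \<epsilon>" and "\<epsilon> < 1/2"
  shows "(\<forall>\<delta>. 0 < \<delta> \<and> \<delta> < 1/2 \<longrightarrow>
            (\<exists>!\<pi>. is_stat_dist n (Pmat n \<epsilon> \<delta>) \<pi>) \<and>
            expected_state n (Pmat n \<epsilon> \<delta>) =
              \<delta> ^ (n - 2) * (2 * \<delta> - 1) / (2 * \<delta> ^ (n - 1) - 2 * (1 - \<delta>) ^ (n - 1))
              + \<delta> ^ (n - 1) * (2 * \<delta> - 1)
                  / (2 * (1 - \<delta>)^2 * (\<delta> ^ (n - 1) - (1 - \<delta>) ^ (n - 1)))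
                * (\<Sum>k=2..n-1. real k * ((1 - \<delta>) / \<delta>) ^ k)
              + real n * ((1 - \<delta>) ^ (n - 2) * (2 * \<delta> - 1)
                  / (2 * \<delta> ^ (n - 1) - 2 * (1 - \<delta>) ^ (n - 1))))
         \<and> ((\<lambda>\<delta>. expected_state n (Pmat n \<epsilon> \<delta>)) \<longlongrightarrow> (2 * real n - 1) / 2) (at_right 0)"
proof -
  have n: "3 \<le> n" and \<epsilon>: "\<epsilon> \<noteq> 0"
    using assms by auto
  have expected_state_eq: "expected_state n (Pmat n \<epsilon> \<delta>) =
      (\<Sum>k=1..n. real k * stat_weight n \<delta> k) / (\<Sum>k=1..n. stat_weight n \<delta> k)"
    if "\<delta> \<in> {0<..<1/2}" for \<delta>
    using expected_state_Pmat[OF n \<epsilon>] that by simp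
  have "(\<exists>!\<pi>. is_stat_dist n (Pmat n \<epsilon> \<delta>) \<pi>)" if "0 < \<delta>" "\<delta> < 1/2" for \<delta>
    using is_stat_dist_Pmat_iff[OF n \<epsilon>] that by simp
  moreover have "((\<lambda>\<delta>. expected_state n (Pmat n \<epsilon> \<delta>)) \<longlongrightarrow> (2 * real n - 1) / 2) (at_right 0)"
  proof (rule Lim_transform_eventually[OF tendsto_weighted_mean_stat_weight[OF n]])
    have "\<forall>\<^sub>F \<delta> in at_right (0::real). \<delta> \<in> {0<..<1/2}"
      by (rule eventually_at_right_real) simp
    then show "\<forall>\<^sub>F \<delta> in at_right 0.
        (\<Sum>k=1..n. real k * stat_weight n \<delta> k) / (\<Sum>k=1..n. stat_weight n \<delta> k) =
        expected_state n (Pmat n \<epsilon> \<delta>)"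
      by eventually_elim (simp add: expected_state_eq)
  qed
  ultimately show ?thesis
    using expected_state_eq weighted_mean_stat_weight[OF n] by simp
qed

end
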